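(* Let $q,n$ be positive integers. For every $j\in\{0,1,\dots,q-1\}$, the code $$\mathcal C_q^{(j)}(n;q-1)=\Big\{\mathbf x\in[q]^n:\ \sum_{i=1}^n x_i\equiv j\pmod{q}\Big\}$$ is an optimal $(\cdot,1,\cdot)$-AED code in $[q]^n$ (it is $(\cdot,1,\cdot)$-AED and has maximum cardinality among such codes), and $|\mathcal C_q^{(j)}(n;q-1)|=q^{n-1}$.
   Context: $[q]=\{0,1,\dots,q-1\}$. Channel over $[q]$ with $(\cdot,1,\cdot)$-asymmetric errors (a single asymmetric error of arbitrary magnitude): an input $\mathbf x\in[q]^n$ can produce any output $\mathbf y\in[q]^n$ with $y_i\ge x_i$ for all $i$ and $y_i\ne x_i$ for at most one index $i$. $\mathrm{Out}(\mathbf x)$ denotes the set of all such outputs. A code $\mathcal C\subseteq[q]^n$ is $(\cdot,1,\cdot)$-AED if for all $\mathbf x\in\mathcal C$ and $\mathbf y\in\mathrm{Out}(\mathbf x)$ with $\mathbf y\ne\mathbf x$, we have $\mathbf y\notin\mathcal C$. *)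

theory Defs
  imports Main
begin

definition words :: "nat \<Rightarrow> nat \<Rightarrow> nat list set" where
  "words q n = {x. length x = n \<and> (\<forall>i<n. x ! i < q)}"

definition Out :: "nat \<Rightarrow> nat list \<Rightarrow> nat list set" where
  "Out q x = {y \<in> words q (length x).
      (\<forall>i<length x. x ! i \<le> y ! i) \<and> card {i. i < length x \<and> y ! i \<noteq> x ! i} \<le> 1}"

definition AED1 :: "nat \<Rightarrow> nat \<Rightarrow> nat list set \<Rightarrow> bool" where
  "AED1 q n C \<longleftrightarrow> C \<subseteq> words q n \<and>
     (\<forall>x\<in>C. \<forall>y\<in>Out q x. y \<noteq> x \<longrightarrow> y \<notin> C)"

definition optimal_AED1 :: "nat \<Rightarrow> nat \<Rightarrow> nat list set \<Rightarrow> bool" where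
  "optimal_AED1 q n C \<longleftrightarrow> AED1 q n C \<and> (\<forall>D. AED1 q n D \<longrightarrow> card D \<le> card C)"

definition sum_code :: "nat \<Rightarrow> nat \<Rightarrow> nat \<Rightarrow> nat list set" where
  "sum_code q n j = {x \<in> words q n. sum_list x mod q = j mod q}"

end

theory Submission
  imports Defs
begin

text \<open>A single asymmetric error raises one coordinate by some amount \<open>d\<close> with \<open>0 < d < q\<close>,
  so it changes the coordinate sum by a nonzero residue mod \<open>q\<close>; hence every residue class of the
  coordinate sum is an error-detecting code. Conversely, two codewords of a detecting code cannot
  differ only in the first coordinate (the smaller one would be turned into the larger by a single
  error), so deleting the first coordinate is injective on the code and the code has at most
  \<open>q^(n-1)\<close> words. The sum codes attain this bound, since the first coordinate of a word in
  \<open>sum_code q n j\<close> can be chosen freely to correct the sum of the others.\<close>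

lemma words_eq: "words q n = {xs. set xs \<subseteq> {0..<q} \<and> length xs = n}"
  unfolding words_def by (auto simp: in_set_conv_nth subset_iff)

lemma finite_words: "finite (words q n)"
  unfolding words_eq by (simp add: finite_lists_length_eq)

lemma card_words: "card (words q n) = q ^ n"
  unfolding words_eq by (simp add: card_lists_length_eq)

lemma Cons_in_words_iff: "a # t \<in> words q (Suc m) \<longleftrightarrow> a < q \<and> t \<in> words q m"
  unfolding words_eq by auto

lemma tl_in_words: "x \<in> words q n \<Longrightarrow> tl x \<in> words q (n - 1)"
  unfolding words_def by (auto simp: nth_tl)

lemma update_in_Out:
  assumes "x \<in> words q n" "i < n" "x ! i \<le> v" "v < q"
  shows "x[i := v] \<in> Out q x"
proof -
  have "{k. k < length x \<and> x[i := v] ! k \<noteq> x ! k} \<subseteq> {i}"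
    by (auto intro: ccontr)
  then have "card {k. k < length x \<and> x[i := v] ! k \<noteq> x ! k} \<le> 1"
    using card_mono[of "{i}"] by fastforce
  moreover have "x[i := v] \<in> words q (length x)"
    using assms unfolding words_def by (simp add: nth_list_update)
  moreover have "\<forall>k<length x. x ! k \<le> x[i := v] ! k"
    using assms unfolding words_def by (simp add: nth_list_update)
  ultimately show ?thesis unfolding Out_def by blast
qed

lemma Out_obtain_update:
  assumes "y \<in> Out q x" "y \<noteq> x"
  obtains i where "i < length x" "x ! i < y ! i" "y = x[i := y ! i]"
proof -
  let ?D = "{k. k < length x \<and> y ! k \<noteq> x ! k}"
  have len: "length y = length x" and le: "\<forall>k<length x. x ! k \<le> y ! k"
    and card: "card ?D \<le> Suc 0"
    using assms(1) unfolding Out_def words_def by auto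
  obtain i where i: "i < length x" "y ! i \<noteq> x ! i"
    using assms(2) len nth_equalityI[of y x] by auto
  have single: "\<forall>k\<in>?D. \<forall>k'\<in>?D. k = k'"
    using card by (subst (asm) card_le_Suc0_iff_eq) auto
  have "y = x[i := y ! i]"
  proof (rule nth_equalityI)
    fix k assume "k < length y"
    then show "y ! k = x[i := y ! i] ! k"
      using single i len by (cases "k = i") auto
  qed (simp add: len)
  with i le show thesis using that by fastforce
qed

lemma sum_list_update_raise:
  fixes x :: "nat list"
  assumes "i < length x" "x ! i \<le> v"
  shows "sum_list (x[i := v]) = sum_list x + (v - x ! i)"
proof -
  have "x ! i \<le> sum_list x" using assms(1) by (simp add: elem_le_sum_list)
  with assms show ?thesis by (simp add: sum_list_update)
qed

lemma mod_add_neq_mod: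
  fixes s d q :: nat
  assumes "0 < d" "d < q"
  shows "(s + d) mod q \<noteq> s mod q"
proof
  assume "(s + d) mod q = s mod q"
  then have "q dvd d" using mod_eq_dvd_iff_nat[of s "s + d" q] by simp
  with assms show False by (simp add: nat_dvd_not_less)
qed

lemma AED1_sum_code: "AED1 q n (sum_code q n j)"
  unfolding AED1_def
proof (intro conjI ballI impI)
  show "sum_code q n j \<subseteq> words q n" unfolding sum_code_def by auto
next
  fix x y assume x: "x \<in> sum_code q n j" and y: "y \<in> Out q x" and "y \<noteq> x"
  obtain i where i: "i < length x" "x ! i < y ! i" and upd: "y = x[i := y ! i]"
    by (rule Out_obtain_update[OF y \<open>y \<noteq> x\<close>])
  have "y ! i < q" using y i unfolding Out_def words_def by auto
  with i have "(sum_list x + (y ! i - x ! i)) mod q \<noteq> sum_list x mod q"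
    by (intro mod_add_neq_mod) auto
  moreover have "sum_list y = sum_list x + (y ! i - x ! i)"
    using i by (subst upd) (simp add: sum_list_update_raise)
  ultimately show "y \<notin> sum_code q n j" using x unfolding sum_code_def by auto
qed

lemma AED1_inj_on_tl:
  assumes "AED1 q n D"
  shows "inj_on tl D"
proof -
  have head_raise_impossible: False
    if "a # t \<in> D" "b # t \<in> D" "a < b" for a b t
  proof -
    have w: "a # t \<in> words q n" "b # t \<in> words q n"
      using that assms unfolding AED1_def by auto
    then have "n = Suc (length t)" unfolding words_def by simp
    with w(2) have "b < q" by (simp add: Cons_in_words_iff)
    with w(1) have "(a # t)[0 := b] \<in> Out q (a # t)"
      using that(3) by (intro update_in_Out[where n = n]) (auto simp: words_def)
    with that assms show False unfolding AED1_def by auto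
  qed
  show ?thesis
  proof
    fix x z assume x: "x \<in> D" and z: "z \<in> D" and tl: "tl x = tl z"
    have len: "length x = length z" using x z assms unfolding AED1_def words_def by auto
    show "x = z"
    proof (cases "x = []")
      case False
      then obtain a t where x_Cons: "x = a # t" by (cases x) auto
      moreover obtain b where z_Cons: "z = b # t"
        using len tl x_Cons by (cases z) auto
      ultimately show ?thesis
        using head_raise_impossible[of a t b] head_raise_impossible[of b t a] x z by (cases a b rule: linorder_cases) auto
    qed (use len in simp)
  qed
qed

lemma card_AED1_le:
  assumes "AED1 q n D"
  shows "card D \<le> q ^ (n - 1)"
proof -
  have "tl ` D \<subseteq> words q (n - 1)"
    using assms tl_in_words unfolding AED1_def by blast
  then have "card (tl ` D) \<le> q ^ (n - 1)"
    using card_mono[OF finite_words] card_words by metis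
  then show ?thesis using card_image[OF AED1_inj_on_tl[OF assms]] by simp
qed

lemma exists_mod_complement:
  fixes q s j :: nat
  assumes "q > 0"
  shows "\<exists>c<q. (c + s) mod q = j mod q"
proof (intro exI conjI)
  let ?c = "(j + (q - s mod q)) mod q"
  show "?c < q" using assms by simp
  have "j + (q - s mod q) + s = j + q * Suc (s div q)"
    using mod_less_divisor[OF assms, of s] mult_div_mod_eq[of q s]
    unfolding mult_Suc_right by linarith
  then have "(j + (q - s mod q) + s) mod q = j mod q" by (simp only: mod_mult_self2)
  then show "(?c + s) mod q = j mod q" by (simp add: mod_add_left_eq)
qed

lemma tl_image_sum_code:
  assumes "q > 0" "n > 0"
  shows "tl ` sum_code q n j = words q (n - 1)"
proof
  show "tl ` sum_code q n j \<subseteq> words q (n - 1)"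
    unfolding sum_code_def using tl_in_words by blast
  show "words q (n - 1) \<subseteq> tl ` sum_code q n j"
  proof
    fix t assume t: "t \<in> words q (n - 1)"
    obtain c where "c < q" "(c + sum_list t) mod q = j mod q"
      using exists_mod_complement[OF assms(1)] by blast
    with t assms have "c # t \<in> sum_code q n j"
      unfolding sum_code_def by (cases n) (auto simp: Cons_in_words_iff)
    then show "t \<in> tl ` sum_code q n j" by (rule rev_image_eqI) simp
  qed
qed

theorem corollary1:
  fixes q n j :: nat
  assumes "q > 0" and "n > 0" and "j < q"
  shows "optimal_AED1 q n (sum_code q n j) \<and> card (sum_code q n j) = q ^ (n - 1)"
proof -
  have "card (sum_code q n j) = card (tl ` sum_code q n j)"
    using card_image[OF AED1_inj_on_tl[OF AED1_sum_code]] by simp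
  also have "\<dots> = q ^ (n - 1)"
    by (simp only: tl_image_sum_code[OF assms(1,2)] card_words)
  finally show ?thesis
    using AED1_sum_code card_AED1_le unfolding optimal_AED1_def by simp
qed

end
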